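(* Let $X$ be a real normed linear space with zero $\theta$, $\dim X>1$, whose norm is strictly convex. Let $f\colon X\to X$ be a motion such that there exists $x\in X$ with $\|f(x)\|\leqslant\|x\|$ and $\|f(-x)\|\leqslant\|x\|$. Then the shift component of $f$ is trivial, i.e. $f(\theta)=\theta$.
   Context: A motion of $X$ is a surjective map $f\colon X\to X$ with $\|f(x)-f(y)\|=\|x-y\|$ for all $x,y$. Every motion decomposes uniquely as $f=h\circ g$ with $g$ a motion fixing $\theta$ and $h(x)=x+a$ a translation (here $a=f(\theta)$); $h$ is called the shift component, and it is trivial when $h$ is the identity, i.e. $a=\theta$. The norm is strictly convex if for all $x\ne y$ with $\|x\|=\|y\|=1$ and all $\lambda\in(0,1)$ one has $\|\lambda x+(1-\lambda)y\|<1$. *)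

theory Defs
  imports "HOL-Analysis.Analysis"
begin

definition motion :: "('a::real_normed_vector \<Rightarrow> 'a) \<Rightarrow> bool" where
  "motion f \<longleftrightarrow> surj f \<and> (\<forall>x y. norm (f x - f y) = norm (x - y))"

definition strictly_convex_norm :: "'a::real_normed_vector itself \<Rightarrow> bool" where
  "strictly_convex_norm TYPE('a) \<longleftrightarrow>
     (\<forall>x y::'a. x \<noteq> y \<longrightarrow> norm x = 1 \<longrightarrow> norm y = 1 \<longrightarrow>
        (\<forall>t::real. 0 < t \<and> t < 1 \<longrightarrow> norm (t *\<^sub>R x + (1 - t) *\<^sub>R y) < 1))"

definition shift_component :: "('a::real_normed_vector \<Rightarrow> 'a) \<Rightarrow> 'a \<Rightarrow> 'a" where
  "shift_component f = (\<lambda>x. x + f 0)"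

end

theory Submission
  imports Defs
begin

text \<open>The images a = f x and b = f (-x) lie at distance 2\<parallel>x\<parallel> while having norms at most \<parallel>x\<parallel>,
  so 0 is a point at distance \<parallel>x\<parallel> from both. In a strictly convex space such a point is
  unique, namely the midpoint of a and b. Since f is an isometry, f 0 is also at distance \<parallel>x\<parallel>
  from both, hence f 0 = midpoint a b = 0.\<close>

lemma strictly_convex_norm_eq_if_norm_add_eq:
  fixes p q :: "'a::real_normed_vector"
  assumes strict: "strictly_convex_norm TYPE('a)"
    and norm_eq: "norm p = norm q"
    and norm_add: "norm (p + q) = norm p + norm q"
  shows "p = q"
proof (rule ccontr)
  assume "p \<noteq> q"
  define r where "r = norm p"
  with \<open>p \<noteq> q\<close> norm_eq have "r > 0" by auto
  let ?u = "(1/r) *\<^sub>R p" and ?v = "(1/r) *\<^sub>R q"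
  have u_ne_v: "?u \<noteq> ?v" using \<open>p \<noteq> q\<close> \<open>r > 0\<close> by simp
  have norm_u: "norm ?u = 1" and norm_v: "norm ?v = 1"
    using norm_eq \<open>r > 0\<close> by (simp_all add: r_def)
  have "norm ((1/2::real) *\<^sub>R ?u + (1 - 1/2) *\<^sub>R ?v) < 1"
    using strict[unfolded strictly_convex_norm_def, rule_format, OF u_ne_v norm_u norm_v, of "1/2"]
    by simp
  moreover have "(1/2::real) *\<^sub>R ?u + (1 - 1/2) *\<^sub>R ?v = (1/(2*r)) *\<^sub>R (p + q)"
    by (simp add: scaleR_add_right)
  moreover have "norm ((1/(2*r)) *\<^sub>R (p + q)) = 1"
    using norm_add norm_eq \<open>r > 0\<close> by (simp add: r_def)
  ultimately show False by (metis less_irrefl)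
qed

lemma strictly_convex_norm_metric_midpoint:
  fixes a b c :: "'a::real_normed_vector"
  assumes strict: "strictly_convex_norm TYPE('a)"
    and "norm (a - c) = norm (c - b)"
    and "norm (a - c) + norm (c - b) = norm (a - b)"
  shows "c = midpoint a b"
proof -
  have "a - c = c - b"
    using strictly_convex_norm_eq_if_norm_add_eq[OF strict, of "a - c" "c - b"] assms(2,3)
    by simp
  then have "a + b = c + c" by (simp add: algebra_simps)
  then show ?thesis by (metis midpoint_eq_iff)
qed

theorem lemma4:
  fixes f :: "'a::real_normed_vector \<Rightarrow> 'a"
  assumes dim_gt_1: "\<exists>u v::'a. u \<noteq> v \<and> independent {u, v}"
    and strict: "strictly_convex_norm TYPE('a)"
    and mot: "motion f"
    and ex: "\<exists>x. norm (f x) \<le> norm x \<and> norm (f (- x)) \<le> norm x"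
  shows "shift_component f = id \<and> f 0 = 0"
proof -
  obtain x where le_a: "norm (f x) \<le> norm x" and le_b: "norm (f (- x)) \<le> norm x"
    using ex by blast
  have iso: "\<And>y z. norm (f y - f z) = norm (y - z)"
    using mot unfolding motion_def by blast
  define a b where "a = f x" and "b = f (- x)"
  have dist_ab: "norm (a - b) = 2 * norm x"
    using iso[of x "- x"] by (simp add: a_def b_def flip: scaleR_2)
  moreover have "norm (a - b) \<le> norm a + norm b" by (rule norm_triangle_ineq4)
  ultimately have "norm a = norm x" "norm b = norm x"
    using le_a le_b by (simp_all add: a_def b_def)
  with dist_ab have "0 = midpoint a b"
    by (intro strictly_convex_norm_metric_midpoint[OF strict]) simp_all
  moreover have "f 0 = midpoint a b"
    using iso[of x 0] iso[of 0 "- x"] dist_ab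
    by (intro strictly_convex_norm_metric_midpoint[OF strict]) (simp_all add: a_def b_def)
  ultimately have "f 0 = 0" by simp
  then show ?thesis unfolding shift_component_def by (simp add: id_def)
qed

end
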